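(* For every spine grammar $\mathcal G$ there is a normalized spine grammar $\mathcal G'$ with $T(\mathcal G')=T(\mathcal G)$.
   Context: sCFTG: $\mathcal G=(N,\Sigma,S,P)$ with disjoint ranked alphabets $N=N_0\cup N_1$ (nullary/unary nonterminals) and $\Sigma=\Sigma_0\cup\Sigma_2$ (no unary terminals), start $S\in N_0$, finite productions $n\to r$ with $n\in N_0$ and $r$ a tree with inner nodes in $\Sigma_2\cup N_1$ (rank 2 resp. 1) and leaves in $N_0\cup\Sigma_0$, or $n\to C$ with $n\in N_1$ and $C$ such a tree additionally containing exactly one leaf $\Box$. A step replaces an occurrence of $n\in N_0$ by $r$, or a subtree $n(t')$ with $n\in N_1$ by $C$ with $\Box$ replaced by $t'$. $T(\mathcal G)$ is the set of trees over $\Sigma$ derivable from $S$. Spine grammar: an sCFTG with a map $d:\Sigma_2\to\{1,2\}$ such that for every production $n\to C$ with $n\in N_1$ and every position $w$ on the path from the root of $C$ to $\Box$ with $C(w)\in\Sigma_2$, the path continues to child $d(C(w))$ of $w$. Normal form: every production has one of the forms (i) start: $n\to b(\alpha)$ or $n\to\alpha$ with $b\in N_1$, $\alpha\in\Sigma_0$; (ii) chain: $n\to b_1(b_2(\Box))$ with $b_1,b_2\in N_1$; (iii) terminal: $n\to\sigma(\Box,a)$ or $n\to\sigma(a,\Box)$ with $\sigma\in\Sigma_2$, $a\in N_0\setminus\{S\}$. For $n\in N_0$, the spinal trees $I_{\mathcal G}(n)$ are the trees $t$ (over $\Sigma_2$, leaves in $\Sigma_0\cup N_0$) obtained from $n$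 by one derivation step of $\mathcal G$ followed by any number of steps using only productions with left-hand side in $N_1$. $\mathcal G$ is normalized if it is in normal form and for every $n\in N_0$ no tree of $I_{\mathcal G}(n)$ contains $n$. *)

theory Defs
  imports Main
begin

text \<open>Sentential-form trees: leaves are the hole, nullary nonterminals, nullary terminals;
inner nodes are unary nonterminals (rank 1) or binary terminals (rank 2).
There are no unary terminals.\<close>
datatype ('n, 't) tr =
    Hole
  | NL 'n
  | TL 't
  | NU 'n "('n, 't) tr"
  | TB 't "('n, 't) tr" "('n, 't) tr"

datatype 't ttree = Leaf 't | Bin 't "'t ttree" "'t ttree"

fun embed :: "'t ttree \<Rightarrow> ('n, 't) tr" where
  "embed (Leaf a) = TL a"
| "embed (Bin s l r) = TB s (embed l) (embed r)"

fun holes :: "('n, 't) tr \<Rightarrow> nat" where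
  "holes Hole = 1"
| "holes (NL n) = 0"
| "holes (TL a) = 0"
| "holes (NU n t) = holes t"
| "holes (TB s l r) = holes l + holes r"

fun subst :: "('n, 't) tr \<Rightarrow> ('n, 't) tr \<Rightarrow> ('n, 't) tr" where
  "subst Hole u = u"
| "subst (NL n) u = NL n"
| "subst (TL a) u = TL a"
| "subst (NU n t) u = NU n (subst t u)"
| "subst (TB s l r) u = TB s (subst l u) (subst r u)"

fun nts0_of :: "('n, 't) tr \<Rightarrow> 'n set" where
  "nts0_of Hole = {}"
| "nts0_of (NL n) = {n}"
| "nts0_of (TL a) = {}"
| "nts0_of (NU n t) = nts0_of t"
| "nts0_of (TB s l r) = nts0_of l \<union> nts0_of r"

fun no_unary :: "('n, 't) tr \<Rightarrow> bool" where
  "no_unary Hole = True"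
| "no_unary (NL n) = True"
| "no_unary (TL a) = True"
| "no_unary (NU n t) = False"
| "no_unary (TB s l r) = (no_unary l \<and> no_unary r)"

fun ttree_over :: "'t set \<Rightarrow> 't set \<Rightarrow> 't ttree \<Rightarrow> bool" where
  "ttree_over S0 S2 (Leaf a) = (a \<in> S0)"
| "ttree_over S0 S2 (Bin s l r) = (s \<in> S2 \<and> ttree_over S0 S2 l \<and> ttree_over S0 S2 r)"

record ('n, 't) scftg =
  nts0 :: "'n set"
  nts1 :: "'n set"
  ts0 :: "'t set"
  ts2 :: "'t set"
  start :: 'n
  prods :: "('n \<times> ('n, 't) tr) set"

fun wf_tree :: "'n set \<Rightarrow> 'n set \<Rightarrow> 't set \<Rightarrow> 't set \<Rightarrow> ('n, 't) tr \<Rightarrow> bool" where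
  "wf_tree N0 N1 S0 S2 Hole = True"
| "wf_tree N0 N1 S0 S2 (NL n) = (n \<in> N0)"
| "wf_tree N0 N1 S0 S2 (TL a) = (a \<in> S0)"
| "wf_tree N0 N1 S0 S2 (NU n t) = (n \<in> N1 \<and> wf_tree N0 N1 S0 S2 t)"
| "wf_tree N0 N1 S0 S2 (TB s l r) = (s \<in> S2 \<and> wf_tree N0 N1 S0 S2 l \<and> wf_tree N0 N1 S0 S2 r)"

definition sCFTG :: "('n, 't) scftg \<Rightarrow> bool" where
  "sCFTG G \<longleftrightarrow>
     finite (nts0 G) \<and> finite (nts1 G) \<and> finite (ts0 G) \<and> finite (ts2 G) \<and>
     nts0 G \<inter> nts1 G = {} \<and> ts0 G \<inter> ts2 G = {} \<and>
     start G \<in> nts0 G \<and> finite (prods G) \<and>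
     (\<forall>(n, r) \<in> prods G.
        wf_tree (nts0 G) (nts1 G) (ts0 G) (ts2 G) r \<and>
        ((n \<in> nts0 G \<and> holes r = 0) \<or> (n \<in> nts1 G \<and> holes r = 1)))"

inductive step :: "'n set \<Rightarrow> 'n set \<Rightarrow> ('n \<times> ('n, 't) tr) set
                   \<Rightarrow> ('n, 't) tr \<Rightarrow> ('n, 't) tr \<Rightarrow> bool"
  for N0 N1 P where
  rule0: "(n, r) \<in> P \<Longrightarrow> n \<in> N0 \<Longrightarrow> step N0 N1 P (NL n) r"
| rule1: "(n, C) \<in> P \<Longrightarrow> n \<in> N1 \<Longrightarrow> step N0 N1 P (NU n t) (subst C t)"
| congU: "step N0 N1 P t t' \<Longrightarrow> step N0 N1 P (NU n t) (NU n t')"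
| congL: "step N0 N1 P l l' \<Longrightarrow> step N0 N1 P (TB s l r) (TB s l' r)"
| congR: "step N0 N1 P r r' \<Longrightarrow> step N0 N1 P (TB s l r) (TB s l r')"

abbreviation gstep :: "('n, 't) scftg \<Rightarrow> ('n, 't) tr \<Rightarrow> ('n, 't) tr \<Rightarrow> bool" where
  "gstep G \<equiv> step (nts0 G) (nts1 G) (prods G)"

definition lang :: "('n, 't) scftg \<Rightarrow> 't ttree set" where
  "lang G = {u. ttree_over (ts0 G) (ts2 G) u \<and> (gstep G)\<^sup>*\<^sup>* (NL (start G)) (embed u)}"

fun spine_ok :: "('t \<Rightarrow> nat) \<Rightarrow> ('n, 't) tr \<Rightarrow> bool" where
  "spine_ok d Hole = True"
| "spine_ok d (NL n) = True"
| "spine_ok d (TL a) = True"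
| "spine_ok d (NU n t) = spine_ok d t"
| "spine_ok d (TB s l r) =
     (if holes l > 0 then d s = 1 \<and> spine_ok d l
      else if holes r > 0 then d s = 2 \<and> spine_ok d r
      else True)"

definition spine_grammar :: "('n, 't) scftg \<Rightarrow> bool" where
  "spine_grammar G \<longleftrightarrow> sCFTG G \<and>
     (\<exists>d :: 't \<Rightarrow> nat. (\<forall>\<sigma> \<in> ts2 G. d \<sigma> \<in> {1, 2}) \<and>
        (\<forall>(n, C) \<in> prods G. n \<in> nts1 G \<longrightarrow> spine_ok d C))"

definition normal_form :: "('n, 't) scftg \<Rightarrow> bool" where
  "normal_form G \<longleftrightarrow>
     (\<forall>(n, r) \<in> prods G.
        \<comment> \<open>start productions\<close>
        (n \<in> nts0 G \<and>
          ((\<exists>b \<in> nts1 G. \<exists>\<alpha> \<in> ts0 G. r = NU b (TL \<alpha>)) \<or> (\<exists>\<alpha> \<in> ts0 G. r = TL \<alpha>)))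
        \<comment> \<open>chain productions\<close>
      \<or> (n \<in> nts1 G \<and> (\<exists>b1 \<in> nts1 G. \<exists>b2 \<in> nts1 G. r = NU b1 (NU b2 Hole)))
        \<comment> \<open>terminal productions\<close>
      \<or> (n \<in> nts1 G \<and> (\<exists>\<sigma> \<in> ts2 G. \<exists>a \<in> nts0 G - {start G}.
             r = TB \<sigma> Hole (NL a) \<or> r = TB \<sigma> (NL a) Hole)))"

definition spinal :: "('n, 't) scftg \<Rightarrow> 'n \<Rightarrow> ('n, 't) tr set" where
  "spinal G n = {t. \<exists>t1. gstep G (NL n) t1 \<and>
      (step (nts0 G) (nts1 G) {p \<in> prods G. fst p \<in> nts1 G})\<^sup>*\<^sup>* t1 t \<and>
      no_unary t \<and> holes t = 0}"

definition normalized :: "('n, 't) scftg \<Rightarrow> bool" where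
  "normalized G \<longleftrightarrow> normal_form G \<and>
     (\<forall>n \<in> nts0 G. \<forall>t \<in> spinal G n. n \<notin> nts0_of t)"

end

theory Submission
  imports Defs
begin

text \<open>
  Fix the spine direction \<open>d\<close> and a bound \<open>K\<close> on the heights of right-hand sides. A fragment is a
  one-hole tree of height at most \<open>K\<close>, optionally followed by a nullary nonterminal \<open>m\<close> and a
  leaf \<open>\<alpha>\<close>; it stands for the nonterminal-free spine contexts derivable from its tree, followed
  by the spine of a derivation from \<open>m\<close> that ends in \<open>\<alpha>\<close>. By induction on derivations, every
  nonempty spine context of a fragment \<open>X\<close> is either a single spine node \<open>\<sigma>(\<box>, u)\<close> whose
  off-spine subtree \<open>u\<close> is derived from a closed tree of height at most \<open>K\<close>, or the composition of
  two nonempty spine contexts of fragments \<open>Y\<close>, \<open>Z\<close> with \<open>L(Y) \<cdot> L(Z) \<subseteq> L(X)\<close>. There are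
  finitely many fragments and closed trees; taking them as unary and nullary nonterminals gives a
  grammar in normal form with the same language, whose chain and terminal productions mirror the two
  kinds of decomposition. A polarity that every terminal production flips for its nullary argument
  keeps each nullary nonterminal out of its own spinal trees. Finally the finitely many nonterminals
  are renamed injectively into \<open>nat\<close>.
\<close>

fun nt_free :: "('n, 't) tr \<Rightarrow> bool" where
  "nt_free Hole = True"
| "nt_free (NL n) = False"
| "nt_free (TL a) = True"
| "nt_free (NU n t) = False"
| "nt_free (TB s l r) = (nt_free l \<and> nt_free r)"

fun height :: "('n, 't) tr \<Rightarrow> nat" where
  "height Hole = 0"
| "height (NL n) = 0"
| "height (TL a) = 0"
| "height (NU n t) = Suc (height t)"
| "height (TB s l r) = Suc (max (height l) (height r))"

fun nodes :: "('n, 't) tr \<Rightarrow> nat" where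
  "nodes Hole = 0"
| "nodes (NL n) = 1"
| "nodes (TL a) = 1"
| "nodes (NU n t) = Suc (nodes t)"
| "nodes (TB s l r) = Suc (nodes l + nodes r)"

fun rename :: "('a \<Rightarrow> 'b) \<Rightarrow> ('a, 't) tr \<Rightarrow> ('b, 't) tr" where
  "rename f Hole = Hole"
| "rename f (NL n) = NL (f n)"
| "rename f (TL a) = TL a"
| "rename f (NU n t) = NU (f n) (rename f t)"
| "rename f (TB s l r) = TB s (rename f l) (rename f r)"

lemma subst_Hole_right [simp]: "subst t Hole = t"
  by (induction t) auto

lemma subst_assoc: "subst (subst t u) v = subst t (subst u v)"
  by (induction t) auto

lemma holes_subst [simp]: "holes (subst t u) = holes t * holes u"
  by (induction t) (auto simp: algebra_simps)

lemma subst_no_holes: "holes t = 0 \<Longrightarrow> subst t u = t"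
  by (induction t) auto

lemma subst_eq_Hole_iff: "subst t u = Hole \<longleftrightarrow> t = Hole \<and> u = Hole"
  by (cases t) auto

lemma nt_free_subst: "nt_free (subst t u) \<longleftrightarrow> nt_free t \<and> (holes t > 0 \<longrightarrow> nt_free u)"
  by (induction t) auto

lemma nodes_subst: "holes t = 1 \<Longrightarrow> nodes (subst t u) = nodes t + nodes u"
proof (induction t)
  case (TB s l r)
  then show ?case by (cases "holes l") (auto simp: subst_no_holes)
qed auto

lemma nodes_pos: "t \<noteq> Hole \<Longrightarrow> 0 < nodes t"
  by (cases t) auto

lemma spine_ok_no_holes: "holes t = 0 \<Longrightarrow> spine_ok d t"
  by (induction t) auto

lemma spine_ok_subst:
  "holes t = 1 \<Longrightarrow> holes u = 1 \<Longrightarrow> spine_ok d (subst t u) \<longleftrightarrow> spine_ok d t \<and> spine_ok d u"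
proof (induction t)
  case (TB s l r)
  then show ?case by (cases "holes l") (auto simp: subst_no_holes)
qed auto

lemma spine_ok_substI:
  "holes t = 1 \<Longrightarrow> spine_ok d t \<Longrightarrow> spine_ok d u \<Longrightarrow> spine_ok d (subst t u)"
proof (induction t)
  case (TB s l r)
  then show ?case by (cases "holes l") (auto simp: subst_no_holes)
qed auto

lemma spine_ok_refine:
  "spine_ok d t \<Longrightarrow> (\<And>\<sigma>. d \<sigma> = 1 \<Longrightarrow> d' \<sigma> = 1) \<Longrightarrow> (\<And>\<sigma>. d \<sigma> = 2 \<Longrightarrow> d' \<sigma> = 2) \<Longrightarrow> spine_ok d' t"
  by (induction t) auto

lemma wf_tree_subst:
  "wf_tree N0 N1 S0 S2 t \<Longrightarrow> wf_tree N0 N1 S0 S2 u \<Longrightarrow> wf_tree N0 N1 S0 S2 (subst t u)"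
  by (induction t) auto

lemma wf_tree_substD: "wf_tree N0 N1 S0 S2 (subst t u) \<Longrightarrow> holes t > 0 \<Longrightarrow> wf_tree N0 N1 S0 S2 u"
  by (induction t) auto

lemma nt_free_embed: "nt_free (embed u)"
  by (induction u) auto

lemma finite_wf_trees_bounded_height:
  assumes "finite N0" "finite N1" "finite S0" "finite S2"
  shows "finite {t. wf_tree N0 N1 S0 S2 t \<and> height t \<le> k}"
proof (induction k)
  case 0
  have "{t. wf_tree N0 N1 S0 S2 t \<and> height t \<le> 0} \<subseteq> insert Hole (NL ` N0 \<union> TL ` S0)"
  proof
    fix t assume "t \<in> {t. wf_tree N0 N1 S0 S2 t \<and> height t \<le> 0}"
    then show "t \<in> insert Hole (NL ` N0 \<union> TL ` S0)" by (cases t) auto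
  qed
  then show ?case using assms finite_subset by blast
next
  case (Suc k)
  let ?T = "{t. wf_tree N0 N1 S0 S2 t \<and> height t \<le> k}"
  let ?S = "insert Hole (NL ` N0 \<union> TL ` S0 \<union> case_prod NU ` (N1 \<times> ?T)
    \<union> (\<lambda>(s, l, r). TB s l r) ` (S2 \<times> ?T \<times> ?T))"
  have "{t. wf_tree N0 N1 S0 S2 t \<and> height t \<le> Suc k} \<subseteq> ?S"
  proof
    fix t assume "t \<in> {t. wf_tree N0 N1 S0 S2 t \<and> height t \<le> Suc k}"
    then show "t \<in> ?S" by (cases t) (auto simp: image_iff)
  qed
  moreover have "finite ?S"
    using Suc assms by simp
  ultimately show ?case by (rule finite_subset)
qed

lemma rename_subst: "rename f (subst t u) = subst (rename f t) (rename f u)"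
  by (induction t) auto

lemma holes_rename [simp]: "holes (rename f t) = holes t"
  by (induction t) auto

lemma spine_ok_rename [simp]: "spine_ok d (rename f t) = spine_ok d t"
  by (induction t) auto

lemma no_unary_rename [simp]: "no_unary (rename f t) = no_unary t"
  by (induction t) auto

lemma nts0_of_rename [simp]: "nts0_of (rename f t) = f ` nts0_of t"
  by (induction t) auto

lemma rename_embed [simp]: "rename f (embed u) = embed u"
  by (induction u) auto

lemma wf_tree_rename: "wf_tree N0 N1 S0 S2 t \<Longrightarrow> wf_tree (f ` N0) (f ` N1) S0 S2 (rename f t)"
  by (induction t) auto

lemma rename_rename_inverse:
  "wf_tree N0 N1 S0 S2 t \<Longrightarrow> (\<And>x. x \<in> N0 \<union> N1 \<Longrightarrow> g (f x) = x) \<Longrightarrow> rename g (rename f t) = t"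
  by (induction t) auto

section \<open>Big-step derivations\<close>

text \<open>A unary nonterminal is expanded together with its argument, so that derivations of
  nonterminal-free trees compose and decompose along \<open>subst\<close>.\<close>

inductive derives :: "('n, 't) scftg \<Rightarrow> ('n, 't) tr \<Rightarrow> ('n, 't) tr \<Rightarrow> bool" for G where
  hole: "derives G Hole Hole"
| leaf: "derives G (TL a) (TL a)"
| nullary: "(n, r) \<in> prods G \<Longrightarrow> n \<in> nts0 G \<Longrightarrow> derives G r v \<Longrightarrow> derives G (NL n) v"
| unary: "(n, C) \<in> prods G \<Longrightarrow> n \<in> nts1 G \<Longrightarrow> derives G C c \<Longrightarrow> derives G t w
    \<Longrightarrow> derives G (NU n t) (subst c w)"
| binary: "derives G l l' \<Longrightarrow> derives G r r' \<Longrightarrow> derives G (TB s l r) (TB s l' r')"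

inductive_cases derives_NLE: "derives G (NL n) v"
inductive_cases derives_NUE: "derives G (NU n t) v"
inductive_cases derives_TBE [elim!]: "derives G (TB s l r) v"
inductive_cases step_NLE: "step N0 N1 P (NL n) v"

lemma derives_Hole_iff [simp]: "derives G Hole v \<longleftrightarrow> v = Hole"
  by (auto elim: derives.cases intro: derives.hole)

lemma derives_TL_iff [simp]: "derives G (TL a) v \<longleftrightarrow> v = TL a"
  by (auto elim: derives.cases intro: derives.leaf)

lemma derives_NU_Hole:
  "(n, C) \<in> prods G \<Longrightarrow> n \<in> nts1 G \<Longrightarrow> derives G C c \<Longrightarrow> derives G (NU n Hole) c"
  using derives.unary[OF _ _ _ derives.hole] by fastforce

lemma step_mono:
  "step N0 N1 P t u \<Longrightarrow> N0 \<subseteq> M0 \<Longrightarrow> N1 \<subseteq> M1 \<Longrightarrow> P \<subseteq> Q \<Longrightarrow> step M0 M1 Q t u"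
  by (induction rule: step.induct) (auto intro: step.intros)

lemma steps_mono:
  "(step N0 N1 P)\<^sup>*\<^sup>* t u \<Longrightarrow> N0 \<subseteq> M0 \<Longrightarrow> N1 \<subseteq> M1 \<Longrightarrow> P \<subseteq> Q \<Longrightarrow> (step M0 M1 Q)\<^sup>*\<^sup>* t u"
  by (induction rule: rtranclp_induct) (auto intro: rtranclp.rtrancl_into_rtrancl step_mono)

lemma steps_cong:
  "(step N0 N1 P)\<^sup>*\<^sup>* t u \<Longrightarrow> (step N0 N1 P)\<^sup>*\<^sup>* (NU n t) (NU n u)"
  "(step N0 N1 P)\<^sup>*\<^sup>* t u \<Longrightarrow> (step N0 N1 P)\<^sup>*\<^sup>* (TB s t r) (TB s u r)"
  "(step N0 N1 P)\<^sup>*\<^sup>* t u \<Longrightarrow> (step N0 N1 P)\<^sup>*\<^sup>* (TB s l t) (TB s l u)"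
  by (induction rule: rtranclp_induct) (auto intro: rtranclp.rtrancl_into_rtrancl step.intros)

lemma steps_subst_right:
  "(step N0 N1 P)\<^sup>*\<^sup>* t u \<Longrightarrow> (step N0 N1 P)\<^sup>*\<^sup>* (subst c t) (subst c u)"
proof (induction c)
  case (TB s l r)
  show ?case
    using rtranclp_trans[OF steps_cong(2)[OF TB.IH(1)] steps_cong(3)[OF TB.IH(2)]] TB.prems by simp
qed (auto intro: steps_cong(1))

locale scftg_grammar =
  fixes G :: "('n, 't) scftg"
  assumes scftg: "sCFTG G"
begin

lemma prod_holes0: "(n, r) \<in> prods G \<Longrightarrow> n \<in> nts0 G \<Longrightarrow> holes r = 0"
  and prod_holes1: "(n, r) \<in> prods G \<Longrightarrow> n \<in> nts1 G \<Longrightarrow> holes r = 1"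
  and prod_wf: "(n, r) \<in> prods G \<Longrightarrow> wf_tree (nts0 G) (nts1 G) (ts0 G) (ts2 G) r"
  using scftg by (auto simp: sCFTG_def)

lemma derives_holes: "derives G t v \<Longrightarrow> holes v = holes t"
  by (induction rule: derives.induct) (auto simp: prod_holes0 prod_holes1)

lemma derives_nt_free: "derives G t v \<Longrightarrow> nt_free v"
  by (induction rule: derives.induct) (auto simp: nt_free_subst)

lemma derives_wf:
  "derives G t v \<Longrightarrow> wf_tree (nts0 G) (nts1 G) (ts0 G) (ts2 G) t
    \<Longrightarrow> wf_tree (nts0 G) (nts1 G) (ts0 G) (ts2 G) v"
  by (induction rule: derives.induct) (auto simp: prod_wf wf_tree_subst)

lemma derives_refl: "nt_free v \<Longrightarrow> derives G v v"
  by (induction v) (auto intro: derives.intros)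

lemma derives_subst: "derives G t v \<Longrightarrow> derives G u w \<Longrightarrow> derives G (subst t u) (subst v w)"
proof (induction rule: derives.induct)
  case (nullary n r v)
  then have "holes v = 0" using derives_holes prod_holes0 by metis
  then show ?case using nullary by (auto simp: subst_no_holes intro: derives.intros)
next
  case (unary n C c t w')
  then show ?case using derives.unary[of n C G c "subst t u" "subst w' w"] by (auto simp: subst_assoc)
qed (auto intro: derives.intros)

lemma derives_subst_split:
  "derives G (subst t u) v \<Longrightarrow> holes t = 1 \<Longrightarrow>
    \<exists>v1 v2. derives G t v1 \<and> derives G u v2 \<and> v = subst v1 v2"
proof (induction t arbitrary: v)
  case Hole
  then show ?case using derives.hole by fastforce
next
  case (NU n t)
  from NU.prems(1) obtain C c x where "(n, C) \<in> prods G" "n \<in> nts1 G" "derives G C c"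
    "derives G (subst t u) x" "v = subst c x"
    by (auto elim: derives_NUE)
  moreover obtain v1 v2 where "derives G t v1" "derives G u v2" "x = subst v1 v2"
    using NU calculation by (metis holes.simps(4))
  ultimately show ?case
    by (intro exI[of _ "subst c v1"] exI[of _ v2]) (auto intro: derives.unary simp: subst_assoc)
next
  case (TB s l r)
  show ?case
  proof (cases "holes l")
    case 0
    with TB.prems obtain l' r' where "derives G l l'" "derives G (subst r u) r'" "v = TB s l' r'"
      by (auto simp: subst_no_holes)
    moreover obtain v1 v2 where "derives G r v1" "derives G u v2" "r' = subst v1 v2"
      using TB.IH(2) TB.prems(2) 0 calculation by (metis add_0 holes.simps(5))
    moreover have "holes l' = 0" using calculation(1) 0 derives_holes by metis
    ultimately show ?thesis
      by (intro exI[of _ "TB s l' v1"] exI[of _ v2]) (auto intro: derives.binary simp: subst_no_holes)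
  next
    case (Suc k)
    with TB.prems have "holes l = 1" "holes r = 0" by auto
    with TB.prems obtain l' r' where "derives G (subst l u) l'" "derives G r r'" "v = TB s l' r'"
      by (auto simp: subst_no_holes)
    moreover obtain v1 v2 where "derives G l v1" "derives G u v2" "l' = subst v1 v2"
      using TB.IH(1) \<open>holes l = 1\<close> calculation by blast
    moreover have "holes r' = 0" using calculation(2) \<open>holes r = 0\<close> derives_holes by metis
    ultimately show ?thesis
      by (intro exI[of _ "TB s v1 r'"] exI[of _ v2]) (auto intro: derives.binary simp: subst_no_holes)
  qed
qed auto

abbreviation "gsteps \<equiv> (gstep G)\<^sup>*\<^sup>*"

lemma step_subst_left: "gstep G t t' \<Longrightarrow> gstep G (subst t u) (subst t' u)"
proof (induction rule: step.induct)
  case (rule0 n r)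
  then show ?case using prod_holes0 by (auto simp: subst_no_holes intro: step.intros)
next
  case (rule1 n C t')
  then show ?case using step.rule1[where t = "subst t' u"] by (auto simp: subst_assoc)
qed (auto intro: step.intros)

lemma steps_subst_left: "gsteps t t' \<Longrightarrow> gsteps (subst t u) (subst t' u)"
  by (induction rule: rtranclp_induct) (auto intro: rtranclp.rtrancl_into_rtrancl step_subst_left)

lemma derives_imp_steps: "derives G t v \<Longrightarrow> gsteps t v"
proof (induction rule: derives.induct)
  case (nullary n r v)
  then show ?case by (meson converse_rtranclp_into_rtranclp step.rule0)
next
  case (unary n C c t w)
  have "gstep G (NU n t) (subst C t)" using unary by (auto intro: step.intros)
  moreover have "gsteps (subst C t) (subst c t)" using unary steps_subst_left by auto
  moreover have "gsteps (subst c t) (subst c w)" using steps_subst_right[OF unary.IH(2)] .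
  ultimately show ?case by (meson converse_rtranclp_into_rtranclp rtranclp_trans)
next
  case (binary l l' r r' s)
  show ?case using rtranclp_trans[OF steps_cong(2)[OF binary.IH(1)] steps_cong(3)[OF binary.IH(2)]] .
qed auto

lemma step_derives: "gstep G t t' \<Longrightarrow> derives G t' v \<Longrightarrow> derives G t v"
proof (induction arbitrary: v rule: step.induct)
  case (rule0 n r)
  then show ?case by (rule derives.nullary)
next
  case (rule1 n C t)
  then show ?case using prod_holes1 derives_subst_split by (metis derives.unary)
next
  case (congU t t' n)
  then show ?case by (auto elim!: derives_NUE intro: derives.unary)
next
  case (congL l l' s r)
  then show ?case by (auto intro: derives.binary)
next
  case (congR r r' s l)
  then show ?case by (auto intro: derives.binary)
qed

lemma steps_iff_derives: "nt_free v \<Longrightarrow> gsteps t v \<longleftrightarrow> derives G t v"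
proof
  show "gsteps t v \<Longrightarrow> nt_free v \<Longrightarrow> derives G t v"
    by (induction rule: converse_rtranclp_induct) (auto intro: derives_refl step_derives)
qed (rule derives_imp_steps)

end

definition spine_node :: "('t \<Rightarrow> nat) \<Rightarrow> 't \<Rightarrow> ('n, 't) tr \<Rightarrow> ('n, 't) tr \<Rightarrow> ('n, 't) tr" where
  "spine_node d \<sigma> c u = (if d \<sigma> = 1 then TB \<sigma> c u else TB \<sigma> u c)"

lemma spine_node_simps [simp]:
  "subst (spine_node d \<sigma> c u) x = spine_node d \<sigma> (subst c x) (subst u x)"
  "holes (spine_node d \<sigma> c u) = holes c + holes u"
  "nt_free (spine_node d \<sigma> c u) \<longleftrightarrow> nt_free c \<and> nt_free u"
  "height (spine_node d \<sigma> c u) = Suc (max (height c) (height u))"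
  "nodes (spine_node d \<sigma> c u) = Suc (nodes c + nodes u)"
  "wf_tree N0 N1 S0 S2 (spine_node d \<sigma> c u) \<longleftrightarrow> \<sigma> \<in> S2 \<and> wf_tree N0 N1 S0 S2 c \<and> wf_tree N0 N1 S0 S2 u"
  "rename f (spine_node d \<sigma> c u) = spine_node d \<sigma> (rename f c) (rename f u)"
  "spine_node d \<sigma> c u = spine_node d \<sigma>' c' u' \<longleftrightarrow> \<sigma> = \<sigma>' \<and> c = c' \<and> u = u'"
  "spine_node d \<sigma> c u \<noteq> Hole" "Hole \<noteq> spine_node d \<sigma> c u"
  "spine_node d \<sigma> c u \<noteq> TL a" "TL a \<noteq> spine_node d \<sigma> c u"
  by (auto simp: spine_node_def)

lemma derives_spine_node_iff:
  "derives G (spine_node d \<sigma> c u) v \<longleftrightarrow> (\<exists>c' u'. v = spine_node d \<sigma> c' u' \<and> derives G c c' \<and> derives G u u')"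
  by (auto simp: spine_node_def intro: derives.binary)

locale spine_scftg = scftg_grammar G for G :: "('n, 't) scftg" +
  fixes d :: "'t \<Rightarrow> nat" and K :: nat
  assumes spine_prods: "(n, C) \<in> prods G \<Longrightarrow> n \<in> nts1 G \<Longrightarrow> spine_ok d C"
    and direction: "d \<sigma> = 1 \<or> d \<sigma> = 2"
    and height_prods: "(n, r) \<in> prods G \<Longrightarrow> height r \<le> K"
begin

abbreviation wf_tr :: "('n, 't) tr \<Rightarrow> bool" where
  "wf_tr \<equiv> wf_tree (nts0 G) (nts1 G) (ts0 G) (ts2 G)"

definition spine_ctx :: "('n, 't) tr \<Rightarrow> bool" where
  "spine_ctx c \<longleftrightarrow> holes c = 1 \<and> spine_ok d c \<and> nt_free c"

lemma spine_induct [case_names Hole NL TL NU spine_node]: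
  assumes "P Hole" "\<And>n. P (NL n)" "\<And>a. P (TL a)" "\<And>n t. P t \<Longrightarrow> P (NU n t)"
    and "\<And>\<sigma> c u. P c \<Longrightarrow> P u \<Longrightarrow> P (spine_node d \<sigma> c u)"
  shows "P t"
proof (induction t)
  case (TB \<sigma> l r)
  then show ?case using assms(5)[of l r \<sigma>] assms(5)[of r l \<sigma>] by (auto simp: spine_node_def split: if_splits)
qed (use assms in auto)

lemma spine_ctx_Hole [simp]: "spine_ctx Hole"
  by (simp add: spine_ctx_def)

lemma not_spine_ctx [simp]: "\<not> spine_ctx (NL n)" "\<not> spine_ctx (NU n t)" "\<not> spine_ctx (TL a)"
  by (auto simp: spine_ctx_def)

lemma spine_ctx_spine_node [simp]:
  "spine_ctx (spine_node d \<sigma> c u) \<longleftrightarrow> spine_ctx c \<and> holes u = 0 \<and> nt_free u"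
  using direction[of \<sigma>] by (auto simp: spine_ctx_def spine_node_def)

lemma spine_ok_spine_node_Hole [simp]: "holes u = 0 \<Longrightarrow> spine_ok d (spine_node d \<sigma> Hole u)"
  using direction[of \<sigma>] by (auto simp: spine_node_def)

lemma spine_ctx_cases:
  assumes "spine_ctx c"
  obtains "c = Hole" | \<sigma> c1 u where "c = spine_node d \<sigma> c1 u" "spine_ctx c1" "holes u = 0" "nt_free u"
proof (cases c)
  case (TB \<sigma> l r)
  then have "c = spine_node d \<sigma> (if d \<sigma> = 1 then l else r) (if d \<sigma> = 1 then r else l)"
    by (simp add: spine_node_def)
  with assms that(2) show thesis by (metis spine_ctx_spine_node)
qed (use assms that in auto)

lemma spine_ctx_subst: "spine_ctx p \<Longrightarrow> spine_ctx y \<Longrightarrow> spine_ctx (subst p y)"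
  by (auto simp: spine_ctx_def spine_ok_subst nt_free_subst)

lemma spine_ctx_substD:
  "holes p = 1 \<Longrightarrow> holes y = 1 \<Longrightarrow> spine_ctx (subst p y) \<Longrightarrow> spine_ctx p \<and> spine_ctx y"
  by (auto simp: spine_ctx_def spine_ok_subst nt_free_subst)

lemma spine_ctx_leaf:
  assumes "nt_free v" "holes v = 0"
  obtains c \<alpha> where "v = subst c (TL \<alpha>)" "spine_ctx c"
proof -
  have "\<exists>c \<alpha>. v = subst c (TL \<alpha>) \<and> spine_ctx c"
    using assms
  proof (induction v rule: spine_induct)
    case (TL a)
    then show ?case by (intro exI[of _ Hole]) auto
  next
    case (spine_node \<sigma> c u)
    then obtain c' \<alpha> where "c = subst c' (TL \<alpha>)" "spine_ctx c'" by auto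
    with spine_node.prems show ?case
      by (intro exI[of _ "spine_node d \<sigma> c' u"] exI[of _ \<alpha>]) (simp add: subst_no_holes)
  qed auto
  then show thesis using that by blast
qed

lemma spine_ctx_leaf_unique:
  "spine_ctx c \<Longrightarrow> spine_ctx c' \<Longrightarrow> subst c (TL \<alpha>) = subst c' (TL \<alpha>') \<Longrightarrow> c = c' \<and> \<alpha> = \<alpha>'"
proof (induction c arbitrary: c' rule: spine_induct)
  case Hole
  from \<open>spine_ctx c'\<close> show ?case
    by (cases rule: spine_ctx_cases) (use Hole.prems in auto)
next
  case (spine_node \<sigma> c u)
  from \<open>spine_ctx c'\<close> show ?case
    by (cases rule: spine_ctx_cases) (use spine_node in \<open>auto simp: subst_no_holes\<close>)
qed auto

lemma spine_ctx_subst_leaf: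
  assumes "spine_ctx p" "nt_free w" "holes w = 0" "subst p w = subst c (TL \<alpha>)" "spine_ctx c"
  obtains c' where "c = subst p c'" "w = subst c' (TL \<alpha>)" "spine_ctx c'"
proof -
  obtain c' \<alpha>' where c': "w = subst c' (TL \<alpha>')" "spine_ctx c'"
    using spine_ctx_leaf assms(2,3) by blast
  then have "spine_ctx (subst p c')" "subst (subst p c') (TL \<alpha>') = subst c (TL \<alpha>)"
    using assms(1,4) spine_ctx_subst by (auto simp: subst_assoc)
  then have "c = subst p c' \<and> \<alpha> = \<alpha>'"
    using spine_ctx_leaf_unique assms(5) by metis
  with c' that show thesis by blast
qed

lemma derives_spine_ok: "derives G t v \<Longrightarrow> spine_ok d t \<Longrightarrow> spine_ok d v"
proof (induction rule: derives.induct)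
  case (nullary n r v)
  then show ?case using derives_holes prod_holes0 spine_ok_no_holes by metis
next
  case (unary n C c t w)
  then show ?case using spine_ok_substI derives_holes prod_holes1 spine_prods by (metis spine_ok.simps(4))
next
  case (binary l l' r r' s)
  then show ?case using derives_holes by auto
qed auto

lemma derives_spine_ctx: "derives G t c \<Longrightarrow> holes t = 1 \<Longrightarrow> spine_ok d t \<Longrightarrow> spine_ctx c"
  using derives_holes derives_spine_ok derives_nt_free by (simp add: spine_ctx_def)

end

section \<open>Fragments\<close>

text \<open>A fragment \<open>(C, e)\<close> stands for the spine contexts derived from \<open>C\<close>, continued for
  \<open>e = Some (m, \<alpha>)\<close> by a spine context \<open>c\<close> with \<open>m \<Rightarrow>* c[\<alpha>]\<close>.\<close>

type_synonym ('n, 't) frag = "('n, 't) tr \<times> ('n \<times> 't) option"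

context spine_scftg
begin

definition tail_lang :: "('n \<times> 't) option \<Rightarrow> ('n, 't) tr set" where
  "tail_lang e = (case e of
      None \<Rightarrow> {Hole}
    | Some (m, \<alpha>) \<Rightarrow> {c. spine_ctx c \<and> derives G (NL m) (subst c (TL \<alpha>))})"

definition frag_lang :: "('n, 't) frag \<Rightarrow> ('n, 't) tr set" where
  "frag_lang X = {subst c1 c2 | c1 c2. derives G (fst X) c1 \<and> spine_ctx c1 \<and> c2 \<in> tail_lang (snd X)}"

definition plug :: "('n, 't) tr \<Rightarrow> ('n, 't) frag \<Rightarrow> ('n, 't) frag" where
  "plug Q W = (subst Q (fst W), snd W)"

definition frag_comp :: "('n, 't) frag \<Rightarrow> ('n, 't) frag \<Rightarrow> ('n, 't) frag \<Rightarrow> bool" where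
  "frag_comp Y Z X \<longleftrightarrow> (\<forall>c1 \<in> frag_lang Y. \<forall>c2 \<in> frag_lang Z. subst c1 c2 \<in> frag_lang X)"

definition bounded_trees :: "('n, 't) tr set" where
  "bounded_trees = {t. wf_tr t \<and> height t \<le> K}"

definition closed_trees :: "('n, 't) tr set" where
  "closed_trees = {s \<in> bounded_trees. holes s = 0}"

definition frags :: "('n, 't) frag set" where
  "frags = bounded_trees \<times> insert None (Some ` (nts0 G \<times> ts0 G))"

fun spine_cut :: "('n, 't) tr \<Rightarrow> 't \<Rightarrow> ('n, 't) frag" where
  "spine_cut Hole \<alpha> = (Hole, None)"
| "spine_cut (NL m) \<alpha> = (Hole, Some (m, \<alpha>))"
| "spine_cut (TL a) \<alpha> = (if a = \<alpha> then Hole else TL a, None)"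
| "spine_cut (NU n t) \<alpha> = plug (NU n Hole) (spine_cut t \<alpha>)"
| "spine_cut (TB \<sigma> l r) \<alpha> =
     (if d \<sigma> = 1 then plug (TB \<sigma> Hole r) (spine_cut l \<alpha>) else plug (TB \<sigma> l Hole) (spine_cut r \<alpha>))"

lemma spine_cut_spine_node:
  "holes u = 0 \<Longrightarrow> spine_cut (spine_node d \<sigma> c u) \<alpha> = plug (spine_node d \<sigma> Hole u) (spine_cut c \<alpha>)"
  by (simp add: spine_node_def)

lemma finite_bounded_trees: "finite bounded_trees"
  using finite_wf_trees_bounded_height scftg unfolding bounded_trees_def sCFTG_def by blast

lemma finite_closed_trees: "finite closed_trees"
  using finite_bounded_trees by (simp add: closed_trees_def)

lemma finite_frags: "finite frags"
  using finite_bounded_trees scftg by (simp add: frags_def sCFTG_def)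

lemma tail_lang_spine_ctx: "c \<in> tail_lang e \<Longrightarrow> spine_ctx c"
  by (auto simp: tail_lang_def split: option.splits)

lemma frag_lang_spine_ctx: "c \<in> frag_lang X \<Longrightarrow> spine_ctx c"
  by (auto simp: frag_lang_def intro: spine_ctx_subst tail_lang_spine_ctx)

lemma frag_lang_None: "c \<in> frag_lang (C, None) \<longleftrightarrow> derives G C c \<and> spine_ctx c"
  by (auto simp: frag_lang_def tail_lang_def)

lemma frag_lang_Hole: "frag_lang (Hole, e) = tail_lang e"
  by (auto simp: frag_lang_def)

lemma frag_lang_plug:
  assumes "p \<in> frag_lang (Q, None)" "c \<in> frag_lang W"
  shows "subst p c \<in> frag_lang (plug Q W)"
proof -
  obtain c1 c2 where c: "c = subst c1 c2" "derives G (fst W) c1" "spine_ctx c1"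
    "c2 \<in> tail_lang (snd W)"
    using assms(2) by (auto simp: frag_lang_def)
  have "derives G (subst Q (fst W)) (subst p c1)" "spine_ctx (subst p c1)"
    using assms(1) c derives_subst spine_ctx_subst by (auto simp: frag_lang_None)
  moreover have "subst p c = subst (subst p c1) c2"
    using c(1) by (simp add: subst_assoc)
  ultimately show ?thesis
    using c(4) unfolding frag_lang_def plug_def by auto
qed

lemma frag_lang_plugE:
  assumes "c \<in> frag_lang (plug Q W)" "holes Q = 1"
  obtains p y where "c = subst p y" "p \<in> frag_lang (Q, None)" "y \<in> frag_lang W"
proof -
  obtain c1 c2 where c: "c = subst c1 c2" "derives G (subst Q (fst W)) c1" "spine_ctx c1"
    "c2 \<in> tail_lang (snd W)"
    using assms(1) by (auto simp: frag_lang_def plug_def)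
  then obtain p y where py: "derives G Q p" "derives G (fst W) y" "c1 = subst p y"
    using derives_subst_split assms(2) by blast
  have "holes p = 1" "holes y = 1"
    using py c(3) assms(2) derives_holes by (auto simp: spine_ctx_def)
  then have "spine_ctx p" "spine_ctx y"
    using spine_ctx_substD[of p y] c(3) py(3) by auto
  then have "p \<in> frag_lang (Q, None)" "subst y c2 \<in> frag_lang W"
    using py c(4) by (auto simp: frag_lang_None, auto simp: frag_lang_def)
  moreover have "c = subst p (subst y c2)"
    using c(1) py(3) by (simp add: subst_assoc)
  ultimately show thesis using that by blast
qed

lemma frag_comp_plug: "frag_comp (Q, None) W (plug Q W)"
  unfolding frag_comp_def using frag_lang_plug by blast

lemma frag_lang_plug_iff:
  assumes "holes Q = 1" "spine_ok d Q" "holes t = 0"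
    and W: "\<And>c. c \<in> frag_lang W \<longleftrightarrow> spine_ctx c \<and> derives G t (subst c (TL \<alpha>))"
  shows "c \<in> frag_lang (plug Q W) \<longleftrightarrow> spine_ctx c \<and> derives G (subst Q t) (subst c (TL \<alpha>))"
proof
  assume "c \<in> frag_lang (plug Q W)"
  then obtain p y where "c = subst p y" "p \<in> frag_lang (Q, None)" "y \<in> frag_lang W"
    using frag_lang_plugE assms(1) by blast
  moreover from this have "spine_ctx p" "derives G Q p" "spine_ctx y" "derives G t (subst y (TL \<alpha>))"
    using W by (auto simp: frag_lang_None)
  ultimately show "spine_ctx c \<and> derives G (subst Q t) (subst c (TL \<alpha>))"
    using derives_subst spine_ctx_subst by (simp add: subst_assoc)
next
  assume c: "spine_ctx c \<and> derives G (subst Q t) (subst c (TL \<alpha>))"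
  then obtain p w where pw: "derives G Q p" "derives G t w" "subst c (TL \<alpha>) = subst p w"
    using derives_subst_split assms(1) by blast
  have "spine_ctx p" using derives_spine_ctx pw(1) assms(1,2) .
  moreover have "nt_free w" "holes w = 0" using pw(2) assms(3) derives_nt_free derives_holes by auto
  ultimately obtain c' where c': "c = subst p c'" "w = subst c' (TL \<alpha>)" "spine_ctx c'"
    using spine_ctx_subst_leaf pw(3) c by (metis (no_types))
  have "p \<in> frag_lang (Q, None)"
    using pw(1) \<open>spine_ctx p\<close> by (simp add: frag_lang_None)
  moreover have "c' \<in> frag_lang W"
    using W c' pw(2) by blast
  ultimately show "c \<in> frag_lang (plug Q W)"
    unfolding c'(1) by (rule frag_lang_plug)
qed

lemma frag_lang_spine_cut:
  "holes s = 0 \<Longrightarrow> c \<in> frag_lang (spine_cut s \<alpha>) \<longleftrightarrow> spine_ctx c \<and> derives G s (subst c (TL \<alpha>))"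
proof (induction s arbitrary: c rule: spine_induct)
  case (NL m)
  then show ?case by (simp add: frag_lang_Hole tail_lang_def)
next
  case (TL a)
  have "subst c (TL \<alpha>) = TL a \<longleftrightarrow> c = Hole \<and> a = \<alpha> \<or> c = TL a"
    by (cases c) auto
  then show ?case by (auto simp: frag_lang_None)
next
  case (NU n t)
  then have "holes t = 0" by simp
  from frag_lang_plug_iff[of "NU n Hole" t "spine_cut t \<alpha>" \<alpha> c, OF _ _ this NU.IH[OF this]]
  show ?case by simp
next
  case (spine_node \<sigma> c' u)
  then have "holes c' = 0" "holes u = 0" by simp_all
  from frag_lang_plug_iff[of "spine_node d \<sigma> Hole u" c' "spine_cut c' \<alpha>" \<alpha> c,
      OF _ _ this(1) spine_node.IH(1)[OF this(1)]] this(2)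
  show ?case by (simp add: spine_cut_spine_node subst_no_holes)
qed simp

lemma spine_cut_frags:
  assumes "s \<in> closed_trees" "\<alpha> \<in> ts0 G"
  shows "spine_cut s \<alpha> \<in> frags"
proof -
  have cut: "height (fst (spine_cut s \<alpha>)) \<le> height s \<and> wf_tr (fst (spine_cut s \<alpha>)) \<and>
    snd (spine_cut s \<alpha>) \<in> insert None (Some ` (nts0 G \<times> ts0 G))"
    if "holes s = 0" "wf_tr s" for s
    using that
  proof (induction s rule: spine_induct)
    case (NU n t)
    then show ?case by (simp add: plug_def)
  next
    case (spine_node \<sigma> c u)
    then show ?case by (auto simp: spine_cut_spine_node plug_def subst_no_holes le_max_iff_disj)
  qed (use assms(2) in auto)
  from assms(1) have "holes s = 0" "wf_tr s" "height s \<le> K"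
    by (auto simp: closed_trees_def bounded_trees_def)
  moreover obtain C e where ce: "spine_cut s \<alpha> = (C, e)"
    by fastforce
  ultimately have "height C \<le> K" "wf_tr C" "e \<in> insert None (Some ` (nts0 G \<times> ts0 G))"
    using cut[of s] by auto
  then show ?thesis
    by (simp add: ce frags_def bounded_trees_def)
qed

section \<open>Decomposition of spine contexts\<close>

text \<open>The two alternatives are the chain and the terminal productions of the normalized grammar.\<close>

definition decomposable :: "('n, 't) frag \<Rightarrow> ('n, 't) tr \<Rightarrow> bool" where
  "decomposable X c \<longleftrightarrow>
     (\<exists>Y Z c1 c2. Y \<in> frags \<and> Z \<in> frags \<and> frag_comp Y Z X \<and> c1 \<in> frag_lang Y \<and> c2 \<in> frag_lang Z \<and>
        c1 \<noteq> Hole \<and> c2 \<noteq> Hole \<and> c = subst c1 c2)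
   \<or> (\<exists>\<sigma> s u. \<sigma> \<in> ts2 G \<and> s \<in> closed_trees \<and> derives G s u \<and> c = spine_node d \<sigma> Hole u \<and>
        frag_lang (spine_node d \<sigma> Hole s, None) \<subseteq> frag_lang X)"

definition yield_decomposable :: "('n, 't) tr \<Rightarrow> ('n, 't) tr \<Rightarrow> bool" where
  "yield_decomposable t v \<longleftrightarrow>
     (holes t = 1 \<longrightarrow> spine_ctx v \<longrightarrow> v \<noteq> Hole \<longrightarrow> decomposable (t, None) v) \<and>
     (\<forall>c \<alpha>. holes t = 0 \<longrightarrow> \<alpha> \<in> ts0 G \<longrightarrow> v = subst c (TL \<alpha>) \<longrightarrow> spine_ctx c \<longrightarrow> c \<noteq> Hole
        \<longrightarrow> decomposable (spine_cut t \<alpha>) c)"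

lemma decomposable_mono: "decomposable X c \<Longrightarrow> frag_lang X \<subseteq> frag_lang X' \<Longrightarrow> decomposable X' c"
  unfolding decomposable_def frag_comp_def by blast

lemma decomposable_subst:
  assumes "Y \<in> frags" "Z \<in> frags" "frag_comp Y Z X" "c1 \<in> frag_lang Y" "c2 \<in> frag_lang Z"
    and "subst c1 c2 \<noteq> Hole"
    and Y: "c1 \<noteq> Hole \<Longrightarrow> decomposable Y c1" and Z: "c2 \<noteq> Hole \<Longrightarrow> decomposable Z c2"
  shows "decomposable X (subst c1 c2)"
proof (cases "c1 = Hole \<or> c2 = Hole")
  case True
  then show ?thesis
  proof
    assume "c1 = Hole"
    then have "frag_lang Z \<subseteq> frag_lang X" "c2 \<noteq> Hole"
      using assms(3,4,6) by (auto simp: frag_comp_def)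
    with \<open>c1 = Hole\<close> show ?thesis using decomposable_mono[OF Z] by simp
  next
    assume "c2 = Hole"
    then have "frag_lang Y \<subseteq> frag_lang X" "c1 \<noteq> Hole"
      using assms(3,5,6) unfolding frag_comp_def by (metis subsetI subst_Hole_right)+
    with \<open>c2 = Hole\<close> show ?thesis using decomposable_mono[OF Y] by simp
  qed
next
  case False
  with assms(1-5) show ?thesis unfolding decomposable_def by blast
qed

lemma decomposable_letter:
  assumes "\<sigma> \<in> ts2 G" "s \<in> closed_trees" "c \<in> frag_lang (spine_node d \<sigma> Hole s, None)"
  shows "decomposable (spine_node d \<sigma> Hole s, None) c"
proof -
  from assms(3) obtain u where "c = spine_node d \<sigma> Hole u" "derives G s u"
    by (auto simp: frag_lang_None derives_spine_node_iff)
  with assms(1,2) show ?thesis unfolding decomposable_def by blast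
qed

lemma yield_decomposable_plug:
  assumes Q: "holes Q = 1" "spine_ok d Q" "(Q, None) \<in> frags" "derives G Q p"
      "p \<noteq> Hole \<Longrightarrow> decomposable (Q, None) p"
    and t: "derives G t w" "t \<in> bounded_trees" "yield_decomposable t w"
    and cut: "\<And>\<alpha>. holes t = 0 \<Longrightarrow> spine_cut (subst Q t) \<alpha> = plug Q (spine_cut t \<alpha>)"
  shows "yield_decomposable (subst Q t) (subst p w)"
proof -
  have ctx_p: "spine_ctx p" using derives_spine_ctx Q(4,1,2) .
  have p: "p \<in> frag_lang (Q, None)" using Q(4) ctx_p by (simp add: frag_lang_None)
  have "decomposable (plug Q (t, None)) (subst p w)"
    if "holes t = 1" "spine_ctx (subst p w)" "subst p w \<noteq> Hole"
  proof -
    have "holes w = 1" using derives_holes[OF t(1)] that(1) by simp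
    then have "spine_ctx w"
      using spine_ctx_substD[of p w] ctx_p that(2) by (simp add: spine_ctx_def)
    then have "w \<in> frag_lang (t, None)" using t(1) by (simp add: frag_lang_None)
    moreover have "(t, None) \<in> frags" using t(2) by (simp add: frags_def)
    ultimately show ?thesis
      using decomposable_subst[OF Q(3) _ frag_comp_plug p, of "(t, None)" w] Q(5) t(3) that
        \<open>spine_ctx w\<close>
      by (simp add: yield_decomposable_def)
  qed
  moreover have "decomposable (plug Q (spine_cut t \<alpha>)) c"
    if asm: "holes t = 0" "\<alpha> \<in> ts0 G" "subst p w = subst c (TL \<alpha>)" "spine_ctx c" "c \<noteq> Hole" for c \<alpha>
  proof -
    have "nt_free w" "holes w = 0" using t(1) asm(1) derives_nt_free derives_holes by auto
    then obtain c' where c': "c = subst p c'" "w = subst c' (TL \<alpha>)" "spine_ctx c'"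
      using spine_ctx_subst_leaf[OF ctx_p _ _ asm(3,4)] by blast
    have "t \<in> closed_trees" using t(2) asm(1) by (simp add: closed_trees_def)
    then have "spine_cut t \<alpha> \<in> frags" using spine_cut_frags asm(2) by blast
    moreover have "c' \<in> frag_lang (spine_cut t \<alpha>)"
      using frag_lang_spine_cut asm(1) c' t(1) by simp
    moreover have "c' \<noteq> Hole \<Longrightarrow> decomposable (spine_cut t \<alpha>) c'"
      using t(3) asm(1,2) c' by (auto simp: yield_decomposable_def)
    ultimately show ?thesis
      using decomposable_subst[OF Q(3) _ frag_comp_plug p, of "spine_cut t \<alpha>" c'] Q(5) asm(5) c'(1)
      by simp
  qed
  ultimately show ?thesis
    using cut Q(1) by (auto simp: yield_decomposable_def plug_def)
qed

lemma yield_decomposable_spine_node: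
  assumes "\<sigma> \<in> ts2 G" "derives G a a'" "derives G b b'" "spine_node d \<sigma> a b \<in> bounded_trees"
    and "yield_decomposable a a'"
  shows "yield_decomposable (spine_node d \<sigma> a b) (spine_node d \<sigma> a' b')"
proof (cases "holes b = 0")
  case False
  then show ?thesis
    using derives_holes[OF assms(3)] by (simp add: yield_decomposable_def)
next
  case True
  let ?Q = "spine_node d \<sigma> Hole b" and ?p = "spine_node d \<sigma> Hole b'"
  have b: "b \<in> closed_trees" "holes b' = 0" "nt_free b'"
    using assms(3,4) True derives_holes derives_nt_free
    by (auto simp: closed_trees_def bounded_trees_def)
  have a: "a \<in> bounded_trees"
    using assms(4) by (auto simp: bounded_trees_def max_def split: if_splits)
  have Q: "(?Q, None) \<in> frags"
    using assms(1,4) b(1) by (auto simp: frags_def bounded_trees_def closed_trees_def max_def split: if_splits)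
  have "derives G ?Q ?p"
    using assms(3) by (auto simp: derives_spine_node_iff)
  moreover from this have "decomposable (?Q, None) ?p"
    using decomposable_letter assms(1) b by (simp add: frag_lang_None)
  ultimately have "yield_decomposable (subst ?Q a) (subst ?p a')"
    using yield_decomposable_plug[OF _ _ Q _ _ assms(2) a assms(5), where p = ?p] True b(2)
    by (simp add: spine_cut_spine_node subst_no_holes)
  then show ?thesis
    using True b by (simp add: subst_no_holes)
qed

lemma yield_decomposable_TB:
  assumes "\<sigma> \<in> ts2 G" "derives G l l'" "derives G r r'" "TB \<sigma> l r \<in> bounded_trees"
    and "yield_decomposable l l'" "yield_decomposable r r'"
  shows "yield_decomposable (TB \<sigma> l r) (TB \<sigma> l' r')"
proof (cases "d \<sigma> = 1")
  case True
  then have "TB \<sigma> l r = spine_node d \<sigma> l r" "TB \<sigma> l' r' = spine_node d \<sigma> l' r'"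
    by (simp_all add: spine_node_def)
  then show ?thesis
    using yield_decomposable_spine_node[OF assms(1-3) _ assms(5)] assms(4) by simp
next
  case False
  then have "TB \<sigma> l r = spine_node d \<sigma> r l" "TB \<sigma> l' r' = spine_node d \<sigma> r' l'"
    by (simp_all add: spine_node_def)
  then show ?thesis
    using yield_decomposable_spine_node[OF assms(1,3,2) _ assms(6)] assms(4) by simp
qed

lemma yield_decomposable_NL:
  assumes "(n, r) \<in> prods G" "n \<in> nts0 G" "yield_decomposable r v"
  shows "yield_decomposable (NL n) v"
proof -
  have r: "holes r = 0"
    using assms(1,2) prod_holes0 by blast
  have "decomposable (spine_cut (NL n) \<alpha>) c"
    if "v = subst c (TL \<alpha>)" "spine_ctx c" "c \<noteq> Hole" "\<alpha> \<in> ts0 G" for c \<alpha>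
  proof -
    have "decomposable (spine_cut r \<alpha>) c"
      using assms(3) r that by (simp add: yield_decomposable_def)
    moreover have "frag_lang (spine_cut r \<alpha>) \<subseteq> frag_lang (spine_cut (NL n) \<alpha>)"
      using assms(1,2) frag_lang_spine_cut[OF r] frag_lang_spine_cut[of "NL n"]
      by (auto intro: derives.nullary)
    ultimately show ?thesis by (rule decomposable_mono)
  qed
  then show ?thesis by (simp add: yield_decomposable_def)
qed

lemma yield_decomposable_NU:
  assumes C: "(n, C) \<in> prods G" "n \<in> nts1 G" "derives G C c" "yield_decomposable C c"
    and t: "derives G t w" "NU n t \<in> bounded_trees" "yield_decomposable t w"
  shows "yield_decomposable (NU n t) (subst c w)"
proof -
  have "t \<in> bounded_trees" "(NU n Hole, None) \<in> frags"
    using t(2) by (auto simp: bounded_trees_def frags_def)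
  moreover have "derives G (NU n Hole) c"
    using derives_NU_Hole C(1-3) .
  moreover have "decomposable (NU n Hole, None) c" if "c \<noteq> Hole"
  proof -
    have "holes C = 1" "spine_ok d C"
      using C(1,2) prod_holes1 spine_prods by auto
    then have "decomposable (C, None) c"
      using C(4) derives_spine_ctx[OF C(3)] that by (simp add: yield_decomposable_def)
    moreover have "frag_lang (C, None) \<subseteq> frag_lang (NU n Hole, None)"
      using derives_NU_Hole[OF C(1,2)] by (auto simp: frag_lang_None)
    ultimately show ?thesis by (rule decomposable_mono)
  qed
  ultimately have "yield_decomposable (subst (NU n Hole) t) (subst c w)"
    using yield_decomposable_plug[of "NU n Hole" c t w] t(1,3) by simp
  then show ?thesis by simp
qed

lemma derives_yield_decomposable: "derives G t v \<Longrightarrow> t \<in> bounded_trees \<Longrightarrow> yield_decomposable t v"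
proof (induction rule: derives.induct)
  case hole
  then show ?case by (simp add: yield_decomposable_def)
next
  case (leaf a)
  have "subst c (TL \<alpha>) = TL a \<Longrightarrow> spine_ctx c \<Longrightarrow> c = Hole" for c \<alpha>
    by (cases c) auto
  then show ?case by (auto simp: yield_decomposable_def)
next
  case (nullary n r v)
  then have "r \<in> bounded_trees"
    using prod_wf height_prods by (auto simp: bounded_trees_def)
  with nullary show ?case by (blast intro: yield_decomposable_NL)
next
  case (unary n C c t w)
  moreover have "C \<in> bounded_trees" "t \<in> bounded_trees"
    using unary prod_wf height_prods by (auto simp: bounded_trees_def)
  ultimately show ?case by (blast intro: yield_decomposable_NU)
next
  case (binary l l' r r' \<sigma>)
  moreover have "l \<in> bounded_trees" "r \<in> bounded_trees" "\<sigma> \<in> ts2 G"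
    using binary.prems by (auto simp: bounded_trees_def)
  ultimately show ?case by (blast intro: yield_decomposable_TB)
qed

lemma frag_lang_decomposable:
  assumes "X \<in> frags" "c \<in> frag_lang X" "c \<noteq> Hole"
  shows "decomposable X c"
proof -
  obtain C e where X: "X = (C, e)" by (cases X)
  from assms(2) obtain c1 c2 where c: "c = subst c1 c2" "derives G C c1" "spine_ctx c1" "c2 \<in> tail_lang e"
    by (auto simp: frag_lang_def X)
  have C: "C \<in> bounded_trees" "holes C = 1"
    using assms(1) X c(2,3) derives_holes by (auto simp: frags_def spine_ctx_def)
  have e: "(Hole, e) \<in> frags" "(C, None) \<in> frags"
    using assms(1) X C(1) by (auto simp: frags_def bounded_trees_def)
  have "decomposable (C, None) c1" if "c1 \<noteq> Hole"
    using derives_yield_decomposable[OF c(2) C(1)] C(2) c(3) that by (simp add: yield_decomposable_def)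
  moreover have "decomposable (Hole, e) c2" if c2: "c2 \<noteq> Hole"
  proof -
    obtain m \<alpha> where m: "e = Some (m, \<alpha>)" "spine_ctx c2" "derives G (NL m) (subst c2 (TL \<alpha>))"
      using c(4) c2 by (auto simp: tail_lang_def split: option.splits)
    then have "m \<in> nts0 G" "\<alpha> \<in> ts0 G"
      using assms(1) X by (auto simp: frags_def)
    then have "yield_decomposable (NL m) (subst c2 (TL \<alpha>))"
      using derives_yield_decomposable[OF m(3)] by (simp add: bounded_trees_def)
    then show ?thesis
      using m c2 \<open>\<alpha> \<in> ts0 G\<close> by (simp add: yield_decomposable_def)
  qed
  moreover have "frag_comp (C, None) (Hole, e) X"
    using frag_comp_plug[of C "(Hole, e)"] X by (simp add: plug_def)
  ultimately show ?thesis
    unfolding c(1)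
    using decomposable_subst[OF e(2,1)] c assms(3) by (simp add: frag_lang_None frag_lang_Hole)
qed

end

section \<open>The normalized grammar\<close>

lemma normal_form_prod:
  assumes "normal_form G" "(n, r) \<in> prods G"
  shows "wf_tree (nts0 G) (nts1 G) (ts0 G) (ts2 G) r \<and> height r \<le> 2 \<and>
    ((n \<in> nts0 G \<and> holes r = 0) \<or> (n \<in> nts1 G \<and> holes r = 1))"
  using assms unfolding normal_form_def by fastforce

lemma sCFTG_if_normal_form:
  assumes "normal_form G" "finite (nts0 G)" "finite (nts1 G)" "finite (ts0 G)" "finite (ts2 G)"
    and "nts0 G \<inter> nts1 G = {}" "ts0 G \<inter> ts2 G = {}" "start G \<in> nts0 G"
  shows "sCFTG G"
proof -
  have "prods G \<subseteq> (nts0 G \<union> nts1 G) \<times> {r. wf_tree (nts0 G) (nts1 G) (ts0 G) (ts2 G) r \<and> height r \<le> 2}"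
    using normal_form_prod[OF assms(1)] by fastforce
  moreover have "finite ((nts0 G \<union> nts1 G) \<times> {r. wf_tree (nts0 G) (nts1 G) (ts0 G) (ts2 G) r \<and> height r \<le> 2})"
    using finite_wf_trees_bounded_height assms(2-5) by blast
  ultimately have "finite (prods G)" by (rule finite_subset)
  then show ?thesis
    using assms normal_form_prod[OF assms(1)] unfolding sCFTG_def by blast
qed

text \<open>\<open>Spine p X\<close> generates the nonempty spine contexts of the fragment \<open>X\<close>, \<open>Subtree p s\<close> the
  trees derived from \<open>s\<close>, and \<open>Start\<close> is a copy of \<open>Subtree False (NL S)\<close> that occurs in no
  right-hand side. Off the spine of \<open>Spine p X\<close> only nonterminals \<open>Subtree (\<not> p) s\<close> occur.\<close>

datatype ('n, 't) nt = Spine bool "('n, 't) frag" | Subtree bool "('n, 't) tr" | Start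

fun polarity :: "('n, 't) nt \<Rightarrow> bool" where
  "polarity (Spine p X) = p"
| "polarity (Subtree p s) = p"
| "polarity Start = False"

fun polarized :: "bool \<Rightarrow> (('n, 't) nt, 't) tr \<Rightarrow> bool" where
  "polarized q Hole = True"
| "polarized q (NL n) = (polarity n \<noteq> q)"
| "polarized q (TL a) = True"
| "polarized q (NU n t) = (polarity n = q \<and> polarized q t)"
| "polarized q (TB \<sigma> l r) = (polarized q l \<and> polarized q r)"

lemma polarized_subst: "polarized q t \<Longrightarrow> polarized q u \<Longrightarrow> polarized q (subst t u)"
  by (induction t) auto

lemma polarized_nts0_of: "polarized q t \<Longrightarrow> n \<in> nts0_of t \<Longrightarrow> polarity n \<noteq> q"
  by (induction t) auto

context spine_scftg
begin

definition nf_nts0 :: "('n, 't) nt set" where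
  "nf_nts0 = insert Start (case_prod Subtree ` (UNIV \<times> closed_trees))"

definition nf_nts1 :: "('n, 't) nt set" where
  "nf_nts1 = case_prod Spine ` (UNIV \<times> frags)"

inductive_set nf_prods :: "(('n, 't) nt \<times> (('n, 't) nt, 't) tr) set" where
  chain: "X \<in> frags \<Longrightarrow> Y \<in> frags \<Longrightarrow> Z \<in> frags \<Longrightarrow> frag_comp Y Z X
    \<Longrightarrow> (Spine p X, NU (Spine p Y) (NU (Spine p Z) Hole)) \<in> nf_prods"
| letter: "X \<in> frags \<Longrightarrow> \<sigma> \<in> ts2 G \<Longrightarrow> s \<in> closed_trees
    \<Longrightarrow> frag_lang (spine_node d \<sigma> Hole s, None) \<subseteq> frag_lang X
    \<Longrightarrow> (Spine p X, spine_node d \<sigma> Hole (NL (Subtree (\<not> p) s))) \<in> nf_prods"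
| leaf: "s \<in> closed_trees \<Longrightarrow> \<alpha> \<in> ts0 G \<Longrightarrow> derives G s (TL \<alpha>) \<Longrightarrow> (Subtree p s, TL \<alpha>) \<in> nf_prods"
| spine: "s \<in> closed_trees \<Longrightarrow> X \<in> frags \<Longrightarrow> \<alpha> \<in> ts0 G
    \<Longrightarrow> (\<forall>c \<in> frag_lang X. derives G s (subst c (TL \<alpha>)))
    \<Longrightarrow> (Subtree p s, NU (Spine p X) (TL \<alpha>)) \<in> nf_prods"
| start: "(Subtree False (NL (start G)), r) \<in> nf_prods \<Longrightarrow> (Start, r) \<in> nf_prods"

definition nf_grammar :: "(('n, 't) nt, 't) scftg" where
  "nf_grammar = \<lparr>nts0 = nf_nts0, nts1 = nf_nts1, ts0 = ts0 G, ts2 = ts2 G, start = Start, prods = nf_prods\<rparr>"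

lemma nf_grammar_simps [simp]:
  "nts0 nf_grammar = nf_nts0" "nts1 nf_grammar = nf_nts1" "ts0 nf_grammar = ts0 G"
  "ts2 nf_grammar = ts2 G" "start nf_grammar = Start" "prods nf_grammar = nf_prods"
  by (simp_all add: nf_grammar_def)

lemma nf_nts_simps [simp]:
  "Start \<in> nf_nts0" "Subtree p s \<in> nf_nts0 \<longleftrightarrow> s \<in> closed_trees" "Spine p X \<notin> nf_nts0"
  "Spine p X \<in> nf_nts1 \<longleftrightarrow> X \<in> frags" "Subtree p s \<notin> nf_nts1" "Start \<notin> nf_nts1"
  by (auto simp: nf_nts0_def nf_nts1_def)

lemma start_closed_tree: "NL (start G) \<in> closed_trees"
  using scftg by (simp add: sCFTG_def closed_trees_def bounded_trees_def)

lemma nf_grammar_normal_form: "normal_form nf_grammar"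
proof -
  have "(n \<in> nf_nts0 \<and> ((\<exists>b \<in> nf_nts1. \<exists>\<alpha> \<in> ts0 G. r = NU b (TL \<alpha>)) \<or> (\<exists>\<alpha> \<in> ts0 G. r = TL \<alpha>)))
    \<or> (n \<in> nf_nts1 \<and> (\<exists>b1 \<in> nf_nts1. \<exists>b2 \<in> nf_nts1. r = NU b1 (NU b2 Hole)))
    \<or> (n \<in> nf_nts1 \<and> (\<exists>\<sigma> \<in> ts2 G. \<exists>a \<in> nf_nts0 - {Start}. r = TB \<sigma> Hole (NL a) \<or> r = TB \<sigma> (NL a) Hole))"
    if "(n, r) \<in> nf_prods" for n r
    using that by induction (auto simp: spine_node_def)
  then show ?thesis
    unfolding normal_form_def by auto
qed

lemma sCFTG_nf_grammar: "sCFTG nf_grammar"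
proof (rule sCFTG_if_normal_form[OF nf_grammar_normal_form])
  show "finite (nts0 nf_grammar)" "finite (nts1 nf_grammar)"
    using finite_closed_trees finite_frags by (simp_all add: nf_nts0_def nf_nts1_def)
  show "nts0 nf_grammar \<inter> nts1 nf_grammar = {}"
    by (auto simp: nf_nts0_def nf_nts1_def)
qed (use scftg in \<open>simp_all add: sCFTG_def\<close>)

interpretation nf: scftg_grammar nf_grammar
  by (rule scftg_grammar.intro) (rule sCFTG_nf_grammar)

lemma nf_prods_spine_ok: "(n, r) \<in> nf_prods \<Longrightarrow> n \<in> nf_nts1 \<Longrightarrow> spine_ok d r"
  by (induction rule: nf_prods.induct) auto

lemma spine_grammar_nf_grammar: "spine_grammar nf_grammar"
  unfolding spine_grammar_def using sCFTG_nf_grammar nf_prods_spine_ok direction by auto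

fun nt_denotes :: "('n, 't) nt \<Rightarrow> ('n, 't) tr \<Rightarrow> bool" where
  "nt_denotes (Spine p X) c \<longleftrightarrow> c \<in> frag_lang X \<and> c \<noteq> Hole"
| "nt_denotes (Subtree p s) v \<longleftrightarrow> derives G s v"
| "nt_denotes Start v \<longleftrightarrow> derives G (NL (start G)) v"

fun denotes :: "(('n, 't) nt, 't) tr \<Rightarrow> ('n, 't) tr \<Rightarrow> bool" where
  "denotes Hole v \<longleftrightarrow> v = Hole"
| "denotes (TL a) v \<longleftrightarrow> v = TL a"
| "denotes (NL n) v \<longleftrightarrow> nt_denotes n v"
| "denotes (NU n t) v \<longleftrightarrow> (\<exists>c w. nt_denotes n c \<and> denotes t w \<and> v = subst c w)"
| "denotes (TB \<sigma> l r) v \<longleftrightarrow> (\<exists>l' r'. v = TB \<sigma> l' r' \<and> denotes l l' \<and> denotes r r')"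

lemma denotes_spine_node:
  "denotes (spine_node d \<sigma> c u) v \<longleftrightarrow> (\<exists>c' u'. v = spine_node d \<sigma> c' u' \<and> denotes c c' \<and> denotes u u')"
  by (auto simp: spine_node_def)

lemma nf_prods_sound: "(n, r) \<in> nf_prods \<Longrightarrow> denotes r v \<Longrightarrow> nt_denotes n v"
proof (induction arbitrary: v rule: nf_prods.induct)
  case (chain X Y Z p)
  then show ?case by (auto simp: frag_comp_def subst_eq_Hole_iff)
next
  case (letter X \<sigma> s p)
  then obtain u where u: "v = spine_node d \<sigma> Hole u" "derives G s u"
    by (auto simp: denotes_spine_node)
  moreover have "holes u = 0" "nt_free u"
    using u(2) letter.hyps(3) derives_holes derives_nt_free by (auto simp: closed_trees_def)
  ultimately have "v \<in> frag_lang (spine_node d \<sigma> Hole s, None)"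
    by (auto simp: frag_lang_None derives_spine_node_iff)
  then show ?case using letter.hyps(4) u(1) by auto
qed auto

text \<open>On a nonterminal-free tree \<open>rename f\<close> merely changes the type, whatever \<open>f\<close> is.\<close>

lemma nf_grammar_sound: "derives nf_grammar t v \<Longrightarrow> denotes t (rename f v)"
proof (induction rule: derives.induct)
  case (nullary n r v)
  then show ?case using nf_prods_sound by simp
next
  case (unary n C c t w)
  then show ?case using nf_prods_sound by (auto simp: rename_subst)
qed auto

lemma nf_derives_Subtree:
  assumes IH: "\<And>c p X. nodes c < nodes v \<Longrightarrow> X \<in> frags \<Longrightarrow> c \<in> frag_lang X \<Longrightarrow> c \<noteq> Hole
      \<Longrightarrow> derives nf_grammar (NU (Spine p X) Hole) (rename f c)"
    and s: "s \<in> closed_trees" "derives G s v"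
  shows "derives nf_grammar (NL (Subtree p s)) (rename f v)"
proof -
  have "holes v = 0" "nt_free v" "wf_tr v"
    using s derives_holes derives_nt_free derives_wf by (auto simp: closed_trees_def bounded_trees_def)
  then obtain c \<alpha> where c: "v = subst c (TL \<alpha>)" "spine_ctx c"
    using spine_ctx_leaf by blast
  then have \<alpha>: "\<alpha> \<in> ts0 G"
    using wf_tree_substD \<open>wf_tr v\<close> by (fastforce simp: spine_ctx_def)
  show ?thesis
  proof (cases "c = Hole")
    case True
    then have "(Subtree p s, TL \<alpha>) \<in> nf_prods"
      using nf_prods.leaf s c \<alpha> by simp
    then show ?thesis
      using True c s(1) by (auto intro: derives.nullary derives.leaf)
  next
    case False
    let ?X = "spine_cut s \<alpha>"
    have "holes s = 0" using s(1) by (simp add: closed_trees_def)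
    then have X: "?X \<in> frags" "c \<in> frag_lang ?X" "\<forall>c \<in> frag_lang ?X. derives G s (subst c (TL \<alpha>))"
      using spine_cut_frags s c \<alpha> frag_lang_spine_cut by auto
    have "nodes c < nodes v"
      using c nodes_subst[of c "TL \<alpha>"] by (simp add: spine_ctx_def)
    then have "derives nf_grammar (NU (Spine p ?X) Hole) (rename f c)"
      using IH False X by blast
    from nf.derives_subst[OF this derives.leaf]
    have "derives nf_grammar (NU (Spine p ?X) (TL \<alpha>)) (rename f v)"
      using c(1) by (simp add: rename_subst)
    moreover have "(Subtree p s, NU (Spine p ?X) (TL \<alpha>)) \<in> nf_prods"
      using nf_prods.spine s(1) X(1,3) \<alpha> by blast
    ultimately show ?thesis
      using s(1) by (auto intro: derives.nullary)
  qed
qed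

lemma nf_derives_Spine:
  assumes IH_Subtree: "\<And>u p s. nodes u < nodes v \<Longrightarrow> s \<in> closed_trees \<Longrightarrow> derives G s u
      \<Longrightarrow> derives nf_grammar (NL (Subtree p s)) (rename f u)"
    and IH_Spine: "\<And>c p X. nodes c < nodes v \<Longrightarrow> X \<in> frags \<Longrightarrow> c \<in> frag_lang X \<Longrightarrow> c \<noteq> Hole
      \<Longrightarrow> derives nf_grammar (NU (Spine p X) Hole) (rename f c)"
    and X: "X \<in> frags" "v \<in> frag_lang X" "v \<noteq> Hole"
  shows "derives nf_grammar (NU (Spine p X) Hole) (rename f v)"
  using frag_lang_decomposable[OF X] unfolding decomposable_def
proof (elim disjE exE conjE)
  fix Y Z c1 c2
  assume split: "Y \<in> frags" "Z \<in> frags" "frag_comp Y Z X" "c1 \<in> frag_lang Y" "c2 \<in> frag_lang Z"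
    "c1 \<noteq> Hole" "c2 \<noteq> Hole" "v = subst c1 c2"
  then have "nodes c1 < nodes v" "nodes c2 < nodes v"
    using nodes_subst nodes_pos frag_lang_spine_ctx by (fastforce simp: spine_ctx_def)+
  then have "derives nf_grammar (NU (Spine p Y) Hole) (rename f c1)"
    "derives nf_grammar (NU (Spine p Z) Hole) (rename f c2)"
    using IH_Spine split by blast+
  then have "derives nf_grammar (NU (Spine p Y) (NU (Spine p Z) Hole)) (rename f v)"
    using nf.derives_subst split(8) by (fastforce simp: rename_subst)
  moreover have "(Spine p X, NU (Spine p Y) (NU (Spine p Z) Hole)) \<in> nf_prods"
    using nf_prods.chain X(1) split(1-3) .
  ultimately show ?thesis
    using X(1) by (auto intro: derives_NU_Hole)
next
  fix \<sigma> s u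
  assume letter: "\<sigma> \<in> ts2 G" "s \<in> closed_trees" "derives G s u" "v = spine_node d \<sigma> Hole u"
    "frag_lang (spine_node d \<sigma> Hole s, None) \<subseteq> frag_lang X"
  then have "derives nf_grammar (NL (Subtree (\<not> p) s)) (rename f u)"
    using IH_Subtree by simp
  then have "derives nf_grammar (spine_node d \<sigma> Hole (NL (Subtree (\<not> p) s))) (rename f v)"
    using letter(4) by (auto simp: derives_spine_node_iff)
  moreover have "(Spine p X, spine_node d \<sigma> Hole (NL (Subtree (\<not> p) s))) \<in> nf_prods"
    using nf_prods.letter X(1) letter(1,2,5) .
  ultimately show ?thesis
    using X(1) by (auto intro: derives_NU_Hole)
qed

lemma nf_grammar_complete:
  "(s \<in> closed_trees \<longrightarrow> derives G s v \<longrightarrow> derives nf_grammar (NL (Subtree p s)) (rename f v)) \<and>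
   (X \<in> frags \<longrightarrow> v \<in> frag_lang X \<longrightarrow> v \<noteq> Hole \<longrightarrow> derives nf_grammar (NU (Spine p X) Hole) (rename f v))"
proof (induction "nodes v" arbitrary: v p s X rule: less_induct)
  case less
  then show ?case
    using nf_derives_Subtree[of v f s p] nf_derives_Spine[of v f X p] by blast
qed

lemma nf_derives_Start:
  assumes "derives nf_grammar (NL (Subtree False (NL (start G)))) v"
  shows "derives nf_grammar (NL Start) v"
proof -
  from assms obtain r where "(Subtree False (NL (start G)), r) \<in> nf_prods" "derives nf_grammar r v"
    by (auto elim: derives_NLE)
  then show ?thesis
    by (intro derives.nullary[where n = Start]) (auto intro: nf_prods.start)
qed

lemma lang_nf_grammar: "lang nf_grammar = lang G"
proof -
  have "derives nf_grammar (NL Start) (embed u) \<longleftrightarrow> derives G (NL (start G)) (embed u)" for u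
    using nf_grammar_sound[of "NL Start" "embed u"] nf_grammar_complete[of "NL (start G)" "embed u"]
      nf_derives_Start start_closed_tree by auto
  moreover have "nf.gsteps (NL Start) (embed u) \<longleftrightarrow> derives nf_grammar (NL Start) (embed u)"
    "gsteps (NL (start G)) (embed u) \<longleftrightarrow> derives G (NL (start G)) (embed u)" for u
    using nf.steps_iff_derives steps_iff_derives nt_free_embed by blast+
  ultimately show ?thesis
    unfolding lang_def by simp
qed

lemma nf_prods_polarized: "(n, r) \<in> nf_prods \<Longrightarrow> polarized (polarity n) r"
  by (induction rule: nf_prods.induct) (auto simp: spine_node_def)

lemma polarized_steps:
  assumes "(step nf_nts0 nf_nts1 {p \<in> nf_prods. fst p \<in> nf_nts1})\<^sup>*\<^sup>* t t'" "polarized q t"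
  shows "polarized q t'"
proof -
  have "polarized q u'" if "step nf_nts0 nf_nts1 {p \<in> nf_prods. fst p \<in> nf_nts1} u u'" "polarized q u" for u u'
    using that
  proof (induction rule: step.induct)
    case (rule0 n r)
    then show ?case by (auto simp: nf_nts0_def nf_nts1_def)
  next
    case (rule1 n C t)
    then have "polarity n = q" "polarized q t" "polarized (polarity n) C"
      using nf_prods_polarized by auto
    then show ?case by (simp add: polarized_subst)
  qed auto
  with assms show ?thesis
    by (induction rule: rtranclp_induct) auto
qed

lemma nf_grammar_normalized: "normalized nf_grammar"
  unfolding normalized_def
proof (intro conjI nf_grammar_normal_form ballI)
  fix n t
  assume "t \<in> spinal nf_grammar n"
  then obtain t1 where "step nf_nts0 nf_nts1 nf_prods (NL n) t1"
    "(step nf_nts0 nf_nts1 {p \<in> nf_prods. fst p \<in> nf_nts1})\<^sup>*\<^sup>* t1 t"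
    by (auto simp: spinal_def)
  then have "polarized (polarity n) t"
    using polarized_steps nf_prods_polarized by (blast elim: step_NLE)
  then show "n \<notin> nts0_of t"
    using polarized_nts0_of by blast
qed

end

section \<open>Renaming nonterminals\<close>

definition rename_prods :: "('a \<Rightarrow> 'b) \<Rightarrow> ('a \<times> ('a, 't) tr) set \<Rightarrow> ('b \<times> ('b, 't) tr) set" where
  "rename_prods f P = (\<lambda>(n, r). (f n, rename f r)) ` P"

definition rename_grammar :: "('a \<Rightarrow> 'b) \<Rightarrow> ('a, 't) scftg \<Rightarrow> ('b, 't) scftg" where
  "rename_grammar f G = \<lparr>nts0 = f ` nts0 G, nts1 = f ` nts1 G, ts0 = ts0 G, ts2 = ts2 G,
     start = f (start G), prods = rename_prods f (prods G)\<rparr>"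

lemma rename_grammar_simps [simp]:
  "nts0 (rename_grammar f G) = f ` nts0 G" "nts1 (rename_grammar f G) = f ` nts1 G"
  "ts0 (rename_grammar f G) = ts0 G" "ts2 (rename_grammar f G) = ts2 G"
  "start (rename_grammar f G) = f (start G)" "prods (rename_grammar f G) = rename_prods f (prods G)"
  by (simp_all add: rename_grammar_def)

lemma rename_prodsI: "(n, r) \<in> P \<Longrightarrow> (f n, rename f r) \<in> rename_prods f P"
  by (force simp: rename_prods_def)

lemma rename_prodsE:
  assumes "(n', r') \<in> rename_prods f P"
  obtains n r where "(n, r) \<in> P" "n' = f n" "r' = rename f r"
  using assms by (auto simp: rename_prods_def)

lemma step_rename:
  "step N0 N1 P t t' \<Longrightarrow> step (f ` N0) (f ` N1) (rename_prods f P) (rename f t) (rename f t')"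
  by (induction rule: step.induct) (auto intro: step.intros rename_prodsI simp: rename_subst)

lemma steps_rename:
  "(step N0 N1 P)\<^sup>*\<^sup>* t t' \<Longrightarrow> (step (f ` N0) (f ` N1) (rename_prods f P))\<^sup>*\<^sup>* (rename f t) (rename f t')"
  by (induction rule: rtranclp_induct) (auto intro: rtranclp.rtrancl_into_rtrancl step_rename)

lemma rename_grammar_inverse:
  assumes "sCFTG G" "\<And>x. x \<in> nts0 G \<union> nts1 G \<Longrightarrow> g (f x) = x"
  shows "rename_grammar g (rename_grammar f G) = G"
proof -
  have inv: "g (f n) = n \<and> rename g (rename f r) = r" if "(n, r) \<in> prods G" for n r
  proof -
    have "wf_tree (nts0 G) (nts1 G) (ts0 G) (ts2 G) r" "n \<in> nts0 G \<union> nts1 G"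
      using that assms(1) by (auto simp: sCFTG_def)
    then show ?thesis using rename_rename_inverse assms(2) by blast
  qed
  have "rename_prods g (rename_prods f (prods G)) = (\<lambda>x. x) ` prods G"
    unfolding rename_prods_def image_image by (rule image_cong) (auto simp: inv)
  moreover have "g ` f ` N = N" if "N \<subseteq> nts0 G \<union> nts1 G" for N
    using that assms(2) by (force simp: image_image)
  moreover have "start G \<in> nts0 G"
    using assms(1) by (simp add: sCFTG_def)
  ultimately show ?thesis
    by (cases G) (simp add: rename_grammar_def assms(2))
qed

lemma lang_rename_grammar_subset: "lang G \<subseteq> lang (rename_grammar f G)"
  unfolding lang_def using steps_rename[where f = f] by fastforce

lemma lang_rename_grammar:
  assumes "sCFTG G" "inj_on f (nts0 G \<union> nts1 G)"
  shows "lang (rename_grammar f G) = lang G"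
proof
  let ?g = "inv_into (nts0 G \<union> nts1 G) f"
  have "rename_grammar ?g (rename_grammar f G) = G"
    by (rule rename_grammar_inverse[OF assms(1)]) (simp add: assms(2))
  then show "lang (rename_grammar f G) \<subseteq> lang G"
    using lang_rename_grammar_subset[of "rename_grammar f G" ?g] by simp
qed (rule lang_rename_grammar_subset)

lemma spinal_rename_grammar:
  assumes "t \<in> spinal G n"
  shows "rename f t \<in> spinal (rename_grammar f G) (f n)"
proof -
  obtain t1 where t1: "gstep G (NL n) t1"
    "(step (nts0 G) (nts1 G) {p \<in> prods G. fst p \<in> nts1 G})\<^sup>*\<^sup>* t1 t" "no_unary t" "holes t = 0"
    using assms by (auto simp: spinal_def)
  have "rename_prods f {p \<in> prods G. fst p \<in> nts1 G}
      \<subseteq> {p \<in> rename_prods f (prods G). fst p \<in> f ` nts1 G}"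
    by (auto simp: rename_prods_def)
  then have "(step (f ` nts0 G) (f ` nts1 G) {p \<in> rename_prods f (prods G). fst p \<in> f ` nts1 G})\<^sup>*\<^sup>*
      (rename f t1) (rename f t)"
    using steps_mono[OF steps_rename[OF t1(2)]] by blast
  then show ?thesis
    using step_rename[OF t1(1), of f] t1(3,4) by (auto simp: spinal_def)
qed

lemma sCFTG_rename_grammar:
  assumes "sCFTG G" "inj_on f (nts0 G \<union> nts1 G)"
  shows "sCFTG (rename_grammar f G)"
proof -
  have "f ` nts0 G \<inter> f ` nts1 G = {}"
    using inj_on_image_Int[OF assms(2), of "nts0 G" "nts1 G"] assms(1) by (auto simp: sCFTG_def)
  moreover have "finite (rename_prods f (prods G))"
    using assms(1) by (simp add: rename_prods_def sCFTG_def)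
  moreover have "\<forall>(n', r') \<in> rename_prods f (prods G). wf_tree (f ` nts0 G) (f ` nts1 G) (ts0 G) (ts2 G) r' \<and>
      ((n' \<in> f ` nts0 G \<and> holes r' = 0) \<or> (n' \<in> f ` nts1 G \<and> holes r' = 1))"
  proof clarify
    fix n' r'
    assume "(n', r') \<in> rename_prods f (prods G)"
    then obtain n r where nr: "(n, r) \<in> prods G" "n' = f n" "r' = rename f r"
      by (rule rename_prodsE)
    then have "wf_tree (nts0 G) (nts1 G) (ts0 G) (ts2 G) r \<and>
        ((n \<in> nts0 G \<and> holes r = 0) \<or> (n \<in> nts1 G \<and> holes r = 1))"
      using assms(1) by (auto simp: sCFTG_def)
    with nr show "wf_tree (f ` nts0 G) (f ` nts1 G) (ts0 G) (ts2 G) r' \<and>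
      ((n' \<in> f ` nts0 G \<and> holes r' = 0) \<or> (n' \<in> f ` nts1 G \<and> holes r' = 1))"
      using wf_tree_rename[of "nts0 G" "nts1 G" "ts0 G" "ts2 G" r f] by auto
  qed
  ultimately show ?thesis
    using assms(1) unfolding sCFTG_def rename_grammar_simps by simp
qed

lemma spine_grammar_rename_grammar:
  assumes "spine_grammar G" "inj_on f (nts0 G \<union> nts1 G)"
  shows "spine_grammar (rename_grammar f G)"
proof -
  obtain d where sc: "sCFTG G" and d: "\<forall>\<sigma> \<in> ts2 G. d \<sigma> \<in> {1, 2}"
    and spine: "\<forall>(n, C) \<in> prods G. n \<in> nts1 G \<longrightarrow> spine_ok d C"
    using assms(1) by (auto simp: spine_grammar_def)
  have "spine_ok d C'" if nC': "(n', C') \<in> rename_prods f (prods G)" "n' \<in> f ` nts1 G" for n' C'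
  proof -
    obtain n C where nC: "(n, C) \<in> prods G" "n' = f n" "C' = rename f C"
      by (rule rename_prodsE[OF nC'(1)])
    have "n \<in> nts0 G \<union> nts1 G"
      using nC(1) sc by (auto simp: sCFTG_def)
    then have "n \<in> nts1 G"
      using nC'(2) nC(2) assms(2) by (auto dest: inj_onD)
    then show ?thesis
      using spine nC by auto
  qed
  then show ?thesis
    using sCFTG_rename_grammar[OF sc assms(2)] d by (auto simp: spine_grammar_def)
qed

lemma normalized_rename_grammar:
  assumes "sCFTG G" "normalized G" "inj_on f (nts0 G \<union> nts1 G)"
  shows "normalized (rename_grammar f G)"
  unfolding normalized_def
proof (intro conjI ballI)
  have "f a \<in> f ` nts0 G - {f (start G)}" if "a \<in> nts0 G - {start G}" for a
    using that assms(1,3) by (auto simp: sCFTG_def dest: inj_onD)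
  then show "normal_form (rename_grammar f G)"
    using assms(2) unfolding normalized_def normal_form_def
    by (fastforce simp: rename_prods_def)
next
  let ?g = "inv_into (nts0 G \<union> nts1 G) f"
  fix n' t
  assume "n' \<in> nts0 (rename_grammar f G)" "t \<in> spinal (rename_grammar f G) n'"
  then obtain n where n: "n \<in> nts0 G" "n' = f n" "t \<in> spinal (rename_grammar f G) (f n)"
    by auto
  have "rename_grammar ?g (rename_grammar f G) = G" "?g (f n) = n"
    using assms(3) n(1) by (auto intro: rename_grammar_inverse[OF assms(1)])
  then have "rename ?g t \<in> spinal G n"
    using spinal_rename_grammar[OF n(3), of ?g] by simp
  then have "n \<notin> nts0_of (rename ?g t)"
    using assms(2) n(1) unfolding normalized_def by blast
  then show "n' \<notin> nts0_of t"
    using \<open>?g (f n) = n\<close> n(2) by (metis image_eqI nts0_of_rename)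
qed

lemma exists_nat_renaming:
  fixes G :: "('n, 't) scftg"
  assumes "spine_grammar G" "normalized G"
  shows "\<exists>G' :: (nat, 't) scftg. spine_grammar G' \<and> normalized G' \<and> lang G' = lang G"
proof -
  have sc: "sCFTG G" using assms(1) by (simp add: spine_grammar_def)
  then have "finite (nts0 G \<union> nts1 G)" by (simp add: sCFTG_def)
  then obtain f :: "'n \<Rightarrow> nat" where "inj_on f (nts0 G \<union> nts1 G)"
    using finite_imp_inj_to_nat_seg by blast
  then show ?thesis
    using spine_grammar_rename_grammar normalized_rename_grammar lang_rename_grammar assms sc by blast
qed

theorem theorem4p5:
  fixes G :: "('n, 't) scftg"
  assumes "spine_grammar G"
  shows "\<exists>G' :: (nat, 't) scftg. spine_grammar G' \<and> normalized G' \<and> lang G' = lang G"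
proof -
  obtain d where sc: "sCFTG G" and spine: "\<forall>(n, C) \<in> prods G. n \<in> nts1 G \<longrightarrow> spine_ok d C"
    using assms by (auto simp: spine_grammar_def)
  have "finite ((height \<circ> snd) ` prods G)"
    using sc by (simp add: sCFTG_def)
  then obtain K where "\<forall>h \<in> (height \<circ> snd) ` prods G. h \<le> K"
    by (auto simp: finite_nat_set_iff_bounded_le)
  then have K: "\<forall>(n, r) \<in> prods G. height r \<le> K"
    by auto
  \<comment> \<open>\<open>d\<close> is only constrained on \<open>ts2 G\<close>; the locale requires directions in \<open>{1, 2}\<close> for all symbols.\<close>
  define d' where "d' \<sigma> = (if d \<sigma> = 2 then 2 else 1 :: nat)" for \<sigma>
  interpret spine_scftg G d' K
  proof
    show "spine_ok d' C" if "(n, C) \<in> prods G" "n \<in> nts1 G" for n C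
      using spine that spine_ok_refine[of d C d'] by (auto simp: d'_def)
  qed (use sc K in \<open>auto simp: d'_def\<close>)
  show ?thesis
    using exists_nat_renaming spine_grammar_nf_grammar nf_grammar_normalized lang_nf_grammar by metis
qed

end
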